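(* Let $\boldsymbol{G}\in\{0,1\}^{r\times m}$ with $r\le m$, let $p=\min\{\lfloor m/2\rfloor,r\}$, and let $q$ be a prime power with $q\ge q_{\min}=\binom{m}{p}$. Then in every execution of the MCD algorithm on $(\boldsymbol{G},q)$, at every step where an entry $h_{k,i}$ ($k\in[r]$, $i\in G_k$) is assigned, the set $\mathbb{F}_q\setminus Z_{k,i}^{L}$ is nonempty, i.e. there is always a value outside the veto set.
   Context: $G_k=\{i: g_{k,i}=1\}$. $\boldsymbol{H}_{[k]}$ is the first $k$ rows of $\boldsymbol{H}\in\mathbb{F}_q^{r\times m}$, $\boldsymbol{H}^{L}_{[k]}$ its columns in $L$. A set $S$ of column indices is a circuit of a matrix if its columns are linearly dependent but those of every proper subset are independent. Veto set: for $2\le k\le r$, $i\in L\subseteq[m]$, with all entries of $\boldsymbol{H}_{[k]}^{L}$ except $h_{k,i}$ fixed, and a circuit $C$ of $\boldsymbol{H}_{[k-1]}$ with $i\in C\subseteq L$, write column $i$ of $\boldsymbol{H}_{[k-1]}$ uniquely as $\sum_{j\in C\setminus\{i\}}f_j\cdot(\text{column }j)$ and set $c(C)=\sum_{j\in C\setminus\{i\}}f_jh_{k,j}$; $Z_{k,i}^{L}=\{c(L'\cup\{i\}):L'\subseteq L\setminus\{i\},\ L'\cup\{i\}\text{ a circuit of }\boldsymbol{H}_{[k-1]}\}$. MCD algorithm: set $h_{k,i}=0$ whenever $g_{k,i}=0$; set $h_{1,i}=1$ for $i\in G_1$; for $k=2,\dots,r$: let $R=G_k$; while $R\ne\emptyset$: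 pick any $i\in R$, set $R\leftarrow R\setminus\{i\}$, $L=[m]\setminus R$, compute $Z_{k,i}^{L}$ from the current entries, and assign to $h_{k,i}$ an arbitrary element of $\mathbb{F}_q\setminus Z_{k,i}^{L}$. *)

theory Defs
  imports Main
begin

text \<open>Matrices are functions nat => nat => 'a, with rows indexed 1..r and
columns indexed 1..m (1-based, as in the paper).\<close>

definition col_dep :: "(nat \<Rightarrow> nat \<Rightarrow> 'a::field) \<Rightarrow> nat \<Rightarrow> nat set \<Rightarrow> bool" where
  "col_dep H k S \<longleftrightarrow>
     (\<exists>a. (\<exists>j\<in>S. a j \<noteq> 0) \<and> (\<forall>l\<in>{1..k}. (\<Sum>j\<in>S. a j * H l j) = 0))"

definition is_circuit :: "(nat \<Rightarrow> nat \<Rightarrow> 'a::field) \<Rightarrow> nat \<Rightarrow> nat set \<Rightarrow> bool" where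
  "is_circuit H k S \<longleftrightarrow> finite S \<and> col_dep H k S \<and> (\<forall>T. T \<subset> S \<longrightarrow> \<not> col_dep H k T)"

definition circ_val :: "(nat \<Rightarrow> nat \<Rightarrow> 'a::field) \<Rightarrow> nat \<Rightarrow> nat \<Rightarrow> nat set \<Rightarrow> 'a" where
  "circ_val H k i C =
     (THE v. \<exists>f. (\<forall>l\<in>{1..k-1}. H l i = (\<Sum>j\<in>C-{i}. f j * H l j))
                 \<and> v = (\<Sum>j\<in>C-{i}. f j * H k j))"

definition veto :: "(nat \<Rightarrow> nat \<Rightarrow> 'a::field) \<Rightarrow> nat \<Rightarrow> nat \<Rightarrow> nat set \<Rightarrow> 'a set" where
  "veto H k i L =
     {circ_val H k i (L' \<union> {i}) | L'. L' \<subseteq> L - {i} \<and> is_circuit H (k-1) (L' \<union> {i})}"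

text \<open>Step t of row k in the MCD algorithm, where row k's support G_k is processed
  in the order given by the list \<sigma> k: i = \<sigma> k ! t, R = remaining (later) indices,
  L = [m] - R.\<close>
definition mcd_L :: "nat \<Rightarrow> (nat \<Rightarrow> nat list) \<Rightarrow> nat \<Rightarrow> nat \<Rightarrow> nat set" where
  "mcd_L m \<sigma> k t = {1..m} - set (drop (Suc t) (\<sigma> k))"

definition mcd_step_ok :: "(nat \<Rightarrow> nat \<Rightarrow> 'a::field) \<Rightarrow> nat \<Rightarrow> (nat \<Rightarrow> nat list) \<Rightarrow> nat \<Rightarrow> nat \<Rightarrow> bool" where
  "mcd_step_ok H m \<sigma> k t \<longleftrightarrow> H k (\<sigma> k ! t) \<notin> veto H k (\<sigma> k ! t) (mcd_L m \<sigma> k t)"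

end

theory Submission imports Defs "HOL-Combinatorics.Multiset_Permutations" begin

(* Every element of the veto set Z_{k,i}^L is c(L' \<union> {i}) for a circuit L' \<union> {i} of H_[k-1].
   Any k columns of the (k-1)-row matrix H_[k-1] are dependent, so such a circuit has at most
   k elements and |L'| \<le> k - 1. Distinct circuits are incomparable, so the sets L' form an
   antichain in the (m-1)-set [m] - {i}; by the LYM inequality there are at most
   binom(m-1, min((m-1)/2, k-1)) of them, and Pascal's rule makes this strictly smaller than
   binom(m, min(m/2, r)) \<le> q. The bound holds for every matrix H, whatever the earlier steps
   of the algorithm chose. *)

lemma card_permutations_with_prefix_set:
  assumes N: "finite N" and A: "A \<subseteq> N"
  shows "card {xs\<in>permutations_of_set N. set (take (card A) xs) = A}
         = fact (card A) * fact (card N - card A)"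
proof -
  let ?S = "{xs\<in>permutations_of_set N. set (take (card A) xs) = A}"
  let ?P = "permutations_of_set A \<times> permutations_of_set (N - A)"
  have "bij_betw (\<lambda>(u, v). u @ v) ?P ?S"
  proof (rule bij_betw_imageI)
    show "inj_on (\<lambda>(u, v). u @ v) ?P"
      by (rule inj_onI, clarify) (simp add: length_finite_permutations_of_set)
    show "(\<lambda>(u, v). u @ v) ` ?P = ?S"
    proof
      show "(\<lambda>(u, v). u @ v) ` ?P \<subseteq> ?S"
        using A by (auto simp: permutations_of_set_def
            length_finite_permutations_of_set[symmetric])
      show "?S \<subseteq> (\<lambda>(u, v). u @ v) ` ?P"
      proof
        fix xs assume xs: "xs \<in> ?S"
        hence d: "distinct xs" "set xs = N" and t: "set (take (card A) xs) = A"
          by (auto simp: permutations_of_set_def)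
        have "set (drop (card A) xs) = N - A"
        proof -
          have "set (take (card A) xs) \<inter> set (drop (card A) xs) = {}"
            using d distinct_append[of "take (card A) xs" "drop (card A) xs"] by simp
          moreover have "set (take (card A) xs) \<union> set (drop (card A) xs) = N"
            using d by (metis append_take_drop_id set_append)
          ultimately show ?thesis using t by blast
        qed
        hence "(take (card A) xs, drop (card A) xs) \<in> ?P"
          using t d by (auto simp: permutations_of_set_def)
        thus "xs \<in> (\<lambda>(u, v). u @ v) ` ?P"
          by (metis (no_types, lifting) append_take_drop_id case_prod_conv image_eqI)
      qed
    qed
  qed
  hence "card ?S = card ?P" by (simp add: bij_betw_same_card)
  also have "\<dots> = fact (card A) * fact (card N - card A)"
    using N A finite_subset[OF A N] by (simp add: card_cartesian_product card_Diff_subset)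
  finally show ?thesis .
qed

(* Lubell's argument: the permutations of N that start with an enumeration of A
   are disjoint for the members A of an antichain. *)
lemma lym_inequality:
  assumes N: "finite N" and F: "F \<subseteq> Pow N"
    and antichain: "\<And>A B. A \<in> F \<Longrightarrow> B \<in> F \<Longrightarrow> A \<subseteq> B \<Longrightarrow> A = B"
  shows "(\<Sum>A\<in>F. fact (card A) * fact (card N - card A)) \<le> (fact (card N) :: nat)"
proof -
  define S where "S A = {xs\<in>permutations_of_set N. set (take (card A) xs) = A}" for A
  have "(\<Sum>A\<in>F. fact (card A) * fact (card N - card A)) = (\<Sum>A\<in>F. card (S A))"
    using F N by (intro sum.cong) (auto simp: S_def card_permutations_with_prefix_set)
  also have "\<dots> = card (\<Union>A\<in>F. S A)"
  proof (rule card_UN_disjoint[symmetric])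
    show "finite F" using F N by (meson finite_Pow_iff finite_subset)
    show "\<forall>A\<in>F. finite (S A)" by (simp add: S_def)
    show "\<forall>A\<in>F. \<forall>B\<in>F. A \<noteq> B \<longrightarrow> S A \<inter> S B = {}"
    proof (intro ballI impI)
      fix A B assume AB: "A \<in> F" "B \<in> F" "A \<noteq> B"
      show "S A \<inter> S B = {}"
      proof (rule ccontr)
        assume "S A \<inter> S B \<noteq> {}"
        then obtain xs where "set (take (card A) xs) = A" "set (take (card B) xs) = B"
          by (auto simp: S_def)
        hence "A \<subseteq> B \<or> B \<subseteq> A" by (metis nle_le set_take_subset_set_take)
        thus False using antichain AB by blast
      qed
    qed
  qed
  also have "\<dots> \<le> card (permutations_of_set N)"
    by (rule card_mono) (auto simp: S_def)
  finally show ?thesis using N by simp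
qed

lemma binomial_le_binomial_min_half:
  assumes "j \<le> s"
  shows "n choose j \<le> n choose min (n div 2) s"
proof (cases "j \<le> n div 2")
  case True
  thus ?thesis using assms by (intro binomial_mono) linarith+
next
  case False
  hence "min (n div 2) s = n div 2" using assms by linarith
  thus ?thesis using binomial_maximum by simp
qed

lemma card_antichain_le_binomial:
  assumes N: "finite N" and F: "F \<subseteq> Pow N"
    and antichain: "\<And>A B. A \<in> F \<Longrightarrow> B \<in> F \<Longrightarrow> A \<subseteq> B \<Longrightarrow> A = B"
    and small: "\<And>A. A \<in> F \<Longrightarrow> card A \<le> s"
  shows "card F \<le> card N choose min (card N div 2) s"
proof -
  define c where "c = card N choose min (card N div 2) s"
  have "card F * fact (card N) = (\<Sum>A\<in>F. fact (card N) :: nat)" by simp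
  also have "\<dots> \<le> (\<Sum>A\<in>F. fact (card A) * fact (card N - card A) * c)"
  proof (rule sum_mono)
    fix A assume A: "A \<in> F"
    have "card A \<le> card N" using A F N by (auto intro: card_mono)
    hence "fact (card N) = fact (card A) * fact (card N - card A) * (card N choose card A)"
      using binomial_fact_lemma[of "card A" "card N"] by simp
    also have "\<dots> \<le> fact (card A) * fact (card N - card A) * c"
      using binomial_le_binomial_min_half[OF small[OF A]] by (simp add: c_def)
    finally show "fact (card N) \<le> fact (card A) * fact (card N - card A) * c" .
  qed
  also have "\<dots> = c * (\<Sum>A\<in>F. fact (card A) * fact (card N - card A))"
    by (simp add: sum_distrib_left mult.commute)
  also have "\<dots> \<le> c * fact (card N)"
    using lym_inequality[OF N F antichain] by simp
  finally show ?thesis by (simp add: c_def)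
qed

lemma binomial_min_half_less_Suc:
  assumes "0 < n" "s < r"
  shows "n choose min (n div 2) s < Suc n choose min (Suc n div 2) r"
proof -
  define j where "j = min (n div 2) s"
  have "Suc j \<le> n" using assms(1) unfolding j_def by linarith
  hence "n choose j < (n choose j) + (n choose Suc j)" by simp
  also have "\<dots> = Suc n choose Suc j" by simp
  also have "\<dots> \<le> Suc n choose min (Suc n div 2) r"
    using assms(2) by (intro binomial_le_binomial_min_half) (simp add: j_def)
  finally show ?thesis unfolding j_def .
qed

lemma col_dep_Suc_if_row_zero:
  assumes "col_dep H n S" "\<forall>j\<in>S. H (Suc n) j = 0"
  shows "col_dep H (Suc n) S"
proof -
  obtain a where a: "\<exists>j\<in>S. a j \<noteq> 0" "\<forall>l\<in>{1..n}. (\<Sum>j\<in>S. a j * H l j) = 0"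
    using assms(1) unfolding col_dep_def by blast
  have "(\<Sum>j\<in>S. a j * H l j) = 0" if "l \<in> {1..Suc n}" for l
    using that a(2) assms(2) by (cases "l = Suc n") auto
  thus ?thesis using a(1) unfolding col_dep_def by blast
qed

(* One step of Gaussian elimination with pivot entry H (Suc n) j0. *)
lemma col_dep_Suc_by_elimination:
  fixes H :: "nat \<Rightarrow> nat \<Rightarrow> 'a::field"
  assumes S: "finite S" "j0 \<in> S" and pivot: "H (Suc n) j0 \<noteq> 0"
    and reduced: "col_dep (\<lambda>l j. H l j - H l j0 * H (Suc n) j / H (Suc n) j0) n (S - {j0})"
  shows "col_dep H (Suc n) S"
proof -
  define c where "c = H (Suc n) j0"
  define S' where "S' = S - {j0}"
  obtain a where a: "\<exists>j\<in>S'. a j \<noteq> 0"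
    and a_dep: "\<forall>l\<in>{1..n}. (\<Sum>j\<in>S'. a j * (H l j - H l j0 * H (Suc n) j / c)) = 0"
    using reduced unfolding col_dep_def S'_def c_def by blast
  define X where "X = (\<Sum>j\<in>S'. a j * H (Suc n) j)"
  define b where "b = a(j0 := - X / c)"
  have S_eq: "S = insert j0 S'" "j0 \<notin> S'" "finite S'" using S by (auto simp: S'_def)
  have b_sum: "(\<Sum>j\<in>S. b j * H l j) = - X / c * H l j0 + (\<Sum>j\<in>S'. a j * H l j)" for l
  proof -
    have "(\<Sum>j\<in>S'. b j * H l j) = (\<Sum>j\<in>S'. a j * H l j)"
      using S_eq by (intro sum.cong) (auto simp: b_def)
    thus ?thesis using S_eq by (simp add: b_def)
  qed
  have "(\<Sum>j\<in>S. b j * H l j) = 0" if l: "l \<in> {1..Suc n}" for l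
  proof (cases "l = Suc n")
    case True
    thus ?thesis using b_sum pivot by (simp add: X_def c_def)
  next
    case False
    hence "l \<in> {1..n}" using l by auto
    have "(\<Sum>j\<in>S'. a j * H l j)
          = (\<Sum>j\<in>S'. a j * (H l j - H l j0 * H (Suc n) j / c) + H l j0 / c * (a j * H (Suc n) j))"
      by (intro sum.cong) (auto simp: algebra_simps)
    also have "\<dots> = H l j0 / c * X"
      using a_dep \<open>l \<in> {1..n}\<close>
      by (simp add: sum.distrib X_def flip: sum_divide_distrib sum_distrib_left)
    finally show ?thesis using b_sum by simp
  qed
  moreover have "\<exists>j\<in>S. b j \<noteq> 0" using a S_eq by (auto simp: b_def)
  ultimately show ?thesis unfolding col_dep_def by blast
qed

lemma col_dep_if_card_gt:
  fixes H :: "nat \<Rightarrow> nat \<Rightarrow> 'a::field"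
  assumes "finite S" "n < card S"
  shows "col_dep H n S"
  using assms
proof (induction n arbitrary: H S)
  case 0
  then obtain j where "j \<in> S" by fastforce
  thus ?case unfolding col_dep_def by (intro exI[of _ "\<lambda>_. 1"]) auto
next
  case (Suc n)
  show ?case
  proof (cases "\<forall>j\<in>S. H (Suc n) j = 0")
    case True
    thus ?thesis using Suc by (intro col_dep_Suc_if_row_zero) auto
  next
    case False
    then obtain j0 where "j0 \<in> S" "H (Suc n) j0 \<noteq> 0" by blast
    thus ?thesis using Suc by (intro col_dep_Suc_by_elimination Suc.IH) auto
  qed
qed

lemma card_circuit_le:
  fixes H :: "nat \<Rightarrow> nat \<Rightarrow> 'a::field"
  assumes "is_circuit H n C"
  shows "card C \<le> Suc n"
proof (rule ccontr)
  assume "\<not> card C \<le> Suc n"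
  hence card_C: "Suc n < card C" by simp
  then obtain x where x: "x \<in> C" by fastforce
  have "finite C" using assms by (simp add: is_circuit_def)
  hence "col_dep H n (C - {x})"
    using card_C x by (intro col_dep_if_card_gt) auto
  moreover have "C - {x} \<subset> C" using x by blast
  ultimately show False using assms by (auto simp: is_circuit_def)
qed

lemma circuit_subset_imp_eq:
  assumes "is_circuit H n A" "is_circuit H n B" "A \<subseteq> B"
  shows "A = B"
  using assms unfolding is_circuit_def by blast

lemma card_veto_le:
  fixes H :: "nat \<Rightarrow> nat \<Rightarrow> 'a::field"
  assumes N: "finite N" "L - {i} \<subseteq> N"
  shows "card (veto H k i L) \<le> card N choose min (card N div 2) (k - 1)"
proof -
  define F where "F = {L'. L' \<subseteq> L - {i} \<and> is_circuit H (k - 1) (L' \<union> {i})}"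
  have F_Pow: "F \<subseteq> Pow N" using N by (auto simp: F_def)
  have antichain: "A = B" if "A \<in> F" "B \<in> F" "A \<subseteq> B" for A B
  proof -
    have "A \<union> {i} = B \<union> {i}"
      using that by (intro circuit_subset_imp_eq[of H "k - 1"]) (auto simp: F_def)
    thus ?thesis using that by (auto simp: F_def)
  qed
  have small: "card A \<le> k - 1" if A: "A \<in> F" for A
  proof -
    have "finite A" using A F_Pow N(1) by (meson PowD finite_subset subsetD)
    moreover have "i \<notin> A" using A by (auto simp: F_def)
    moreover have "card (A \<union> {i}) \<le> Suc (k - 1)"
      using A by (intro card_circuit_le) (auto simp: F_def)
    ultimately show ?thesis by simp
  qed
  have "veto H k i L = (\<lambda>L'. circ_val H k i (L' \<union> {i})) ` F"
    unfolding veto_def F_def by blast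
  hence "card (veto H k i L) \<le> card F"
    using card_image_le finite_subset[OF F_Pow] N(1) by simp
  also have "\<dots> \<le> card N choose min (card N div 2) (k - 1)"
    by (rule card_antichain_le_binomial[OF N(1) F_Pow antichain small])
  finally show ?thesis .
qed

theorem proposition6:
  fixes g :: "nat \<Rightarrow> nat \<Rightarrow> nat"
    and r m :: nat
    and H :: "nat \<Rightarrow> nat \<Rightarrow> 'a::{field,finite}"
    and \<sigma> :: "nat \<Rightarrow> nat list"
    and k t :: nat
  assumes G01: "\<forall>k'\<in>{1..r}. \<forall>i\<in>{1..m}. g k' i \<in> {0, 1}"
    and rm: "r \<le> m"
    and q: "card (UNIV :: 'a set) \<ge> m choose (min (m div 2) r)"
    and zeros: "\<forall>k'\<in>{1..r}. \<forall>i\<in>{1..m}. g k' i = 0 \<longrightarrow> H k' i = 0"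
    and row1: "\<forall>i\<in>{1..m}. g 1 i = 1 \<longrightarrow> H 1 i = 1"
    and order: "\<forall>k'\<in>{2..r}. distinct (\<sigma> k') \<and> set (\<sigma> k') = {i\<in>{1..m}. g k' i = 1}"
    and prev_rows: "\<forall>k'\<in>{2..<k}. \<forall>t'<length (\<sigma> k'). mcd_step_ok H m \<sigma> k' t'"
    and prev_steps: "\<forall>t'<t. mcd_step_ok H m \<sigma> k t'"
    and k: "k \<in> {2..r}"
    and t: "t < length (\<sigma> k)"
  shows "UNIV - veto H k (\<sigma> k ! t) (mcd_L m \<sigma> k t) \<noteq> {}"
proof -
  define i where "i = \<sigma> k ! t"
  have i: "i \<in> {1..m}" using order k t nth_mem unfolding i_def by fastforce
  have "card (veto H k i (mcd_L m \<sigma> k t)) \<le> (m - 1) choose min ((m - 1) div 2) (k - 1)"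
    using card_veto_le[of "{1..m} - {i}" "mcd_L m \<sigma> k t" i H k] i
    by (auto simp: mcd_L_def)
  also have "\<dots> < m choose min (m div 2) r"
  proof -
    have "0 < m - 1" "k - 1 < r" "Suc (m - 1) = m" using k rm by auto
    thus ?thesis using binomial_min_half_less_Suc by metis
  qed
  also have "\<dots> \<le> card (UNIV :: 'a set)" by (rule q)
  finally have "veto H k i (mcd_L m \<sigma> k t) \<noteq> UNIV" by auto
  thus ?thesis unfolding i_def by blast
qed

end
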